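(* Let $u_t+C(t,x)uu_x=A^2(t,x)u_{xx}$ and $\tilde u_{\tilde t}+\tilde C\tilde u\tilde u_{\tilde x}=\tilde A^2\tilde u_{\tilde x\tilde x}$ be two equations of the class $\mathcal L_1$. A point transformation in the space with coordinates $(t,x,u)$ maps the first equation to the second if and only if its components are of the form \[ \tilde t=T(t),\quad \tilde x=X(t,x),\quad \tilde u=U^1u+U^0, \] where $T$ and $X$ are smooth functions of their arguments, $U^0$ and $U^1$ are constants, $T_tX_xU^1\neq0$, the function $X$ satisfies the Kolmogorov equation \[ X_t=A^2X_{xx}+\frac{U^0C}{U^1}X_x, \] and the arbitrary elements are related by $\tilde C=\dfrac{X_x}{T_tU^1}C$, $\tilde A^2=\dfrac{X_x^2}{T_t}A^2$ (left-hand sides evaluated at $(T(t),X(t,x))$).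
   Context: All functions are smooth. $\mathcal L$ denotes the class of equations $u_t+C(t,x)uu_x=A^2(t,x)u_{xx}$ for $u(t,x)$, with arbitrary elements $A^2$, $C$ smooth functions of $(t,x)$ with $A^2C\neq0$ ($A^2$ is the name of a single function). $\mathcal L_1$ is the subclass of $\mathcal L$ singled out by the condition \[ \left(\frac{C_t}{C}-C\left(A^2\frac{C_x}{C^2}\right)_x\right)_x\neq0, \] where $C^2$ is the square of $C$. *)

theory Defs
  imports "HOL-Analysis.Analysis"
begin

definition pt :: "(real \<Rightarrow> real \<Rightarrow> real) \<Rightarrow> real \<Rightarrow> real \<Rightarrow> real" where
  "pt f t x = deriv (\<lambda>s. f s x) t"

definition px :: "(real \<Rightarrow> real \<Rightarrow> real) \<Rightarrow> real \<Rightarrow> real \<Rightarrow> real" where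
  "px f t x = deriv (\<lambda>y. f t y) x"

definition d1 :: "(real \<Rightarrow> real \<Rightarrow> real \<Rightarrow> real) \<Rightarrow> real \<Rightarrow> real \<Rightarrow> real \<Rightarrow> real" where
  "d1 F t x u = deriv (\<lambda>s. F s x u) t"

definition d2 :: "(real \<Rightarrow> real \<Rightarrow> real \<Rightarrow> real) \<Rightarrow> real \<Rightarrow> real \<Rightarrow> real \<Rightarrow> real" where
  "d2 F t x u = deriv (\<lambda>y. F t y u) x"

definition d3 :: "(real \<Rightarrow> real \<Rightarrow> real \<Rightarrow> real) \<Rightarrow> real \<Rightarrow> real \<Rightarrow> real \<Rightarrow> real" where
  "d3 F t x u = deriv (\<lambda>v. F t x v) u"

text \<open>Smoothness (C-infinity): (Frechet) differentiable everywhere, and all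
  first-order partial derivatives are again smooth.\<close>

coinductive smooth1 :: "(real \<Rightarrow> real) \<Rightarrow> bool" where
  "(\<forall>t. f differentiable (at t)) \<Longrightarrow> smooth1 (deriv f) \<Longrightarrow> smooth1 f"

coinductive smooth2 :: "(real \<Rightarrow> real \<Rightarrow> real) \<Rightarrow> bool" where
  "(\<forall>t x. (\<lambda>p. f (fst p) (snd p)) differentiable (at (t, x)))
    \<Longrightarrow> smooth2 (pt f) \<Longrightarrow> smooth2 (px f) \<Longrightarrow> smooth2 f"

coinductive smooth3 :: "(real \<Rightarrow> real \<Rightarrow> real \<Rightarrow> real) \<Rightarrow> bool" where
  "(\<forall>t x u. (\<lambda>p. F (fst p) (fst (snd p)) (snd (snd p))) differentiable (at (t, x, u)))
    \<Longrightarrow> smooth3 (d1 F) \<Longrightarrow> smooth3 (d2 F) \<Longrightarrow> smooth3 (d3 F) \<Longrightarrow> smooth3 F"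

text \<open>Equation u_t + C u u_x = A2 u_xx with arbitrary elements (A2, C);
  A2 is a single function (the square A^2 in the paper).\<close>

definition in_class_L :: "(real \<Rightarrow> real \<Rightarrow> real) \<Rightarrow> (real \<Rightarrow> real \<Rightarrow> real) \<Rightarrow> bool" where
  "in_class_L A2 C \<longleftrightarrow> smooth2 A2 \<and> smooth2 C \<and> (\<forall>t x. A2 t x * C t x \<noteq> 0)"

definition L1_expr :: "(real \<Rightarrow> real \<Rightarrow> real) \<Rightarrow> (real \<Rightarrow> real \<Rightarrow> real) \<Rightarrow> real \<Rightarrow> real \<Rightarrow> real" where
  "L1_expr A2 C = (\<lambda>t x. pt C t x / C t x
      - C t x * px (\<lambda>t' x'. A2 t' x' * px C t' x' / (C t' x')\<^sup>2) t x)"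

definition in_class_L1 :: "(real \<Rightarrow> real \<Rightarrow> real) \<Rightarrow> (real \<Rightarrow> real \<Rightarrow> real) \<Rightarrow> bool" where
  "in_class_L1 A2 C \<longleftrightarrow> in_class_L A2 C \<and> (\<forall>t x. px (L1_expr A2 C) t x \<noteq> 0)"

text \<open>A point of the second-order jet space is (t,x,u,u_t,u_x,u_tt,u_tx,u_xx),
  written (t,x,u,p,q,r,s,w).  The equation E(A2,C) is the manifold
  p + C(t,x) u q = A2(t,x) w.\<close>

definition on_eq :: "(real \<Rightarrow> real \<Rightarrow> real) \<Rightarrow> (real \<Rightarrow> real \<Rightarrow> real)
    \<Rightarrow> real \<Rightarrow> real \<Rightarrow> real \<Rightarrow> real \<Rightarrow> real \<Rightarrow> real \<Rightarrow> bool" where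
  "on_eq A2 C t x u p q w \<longleftrightarrow> p + C t x * u * q = A2 t x * w"

definition Dt where
  "Dt F t x u p = d1 F t x u + p * d3 F t x u"
definition Dx where
  "Dx F t x u q = d2 F t x u + q * d3 F t x u"
definition Dtt where
  "Dtt F t x u p r = d1 (d1 F) t x u + 2 * p * d1 (d3 F) t x u
      + p\<^sup>2 * d3 (d3 F) t x u + r * d3 F t x u"
definition Dtx where
  "Dtx F t x u p q s = d1 (d2 F) t x u + p * d2 (d3 F) t x u + q * d1 (d3 F) t x u
      + p * q * d3 (d3 F) t x u + s * d3 F t x u"
definition Dxx where
  "Dxx F t x u q w = d2 (d2 F) t x u + 2 * q * d2 (d3 F) t x u
      + q\<^sup>2 * d3 (d3 F) t x u + w * d3 F t x u"

definition jacobian3 where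
  "jacobian3 tau xi ups t x u =
      d1 tau t x u * (d2 xi t x u * d3 ups t x u - d3 xi t x u * d2 ups t x u)
    - d2 tau t x u * (d1 xi t x u * d3 ups t x u - d3 xi t x u * d1 ups t x u)
    + d3 tau t x u * (d1 xi t x u * d2 ups t x u - d2 xi t x u * d1 ups t x u)"

definition point_transformation ::
  "(real \<Rightarrow> real \<Rightarrow> real \<Rightarrow> real) \<Rightarrow> (real \<Rightarrow> real \<Rightarrow> real \<Rightarrow> real)
    \<Rightarrow> (real \<Rightarrow> real \<Rightarrow> real \<Rightarrow> real) \<Rightarrow> bool" where
  "point_transformation tau xi ups \<longleftrightarrow> smooth3 tau \<and> smooth3 xi \<and> smooth3 ups \<and>
     (\<forall>t x u. jacobian3 tau xi ups t x u \<noteq> 0)"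

text \<open>Second prolongation, given implicitly by the chain rule: the jet point
  (t',x',u',p',q',r',s',w') is the image of (t,x,u,p,q,r,s,w) under the second
  prolongation of (tau,xi,ups).  The prolongation is defined exactly at those
  jet points where the matrix of total derivatives of (tau,xi) is nonsingular,
  and then the image is uniquely determined by these relations.\<close>

definition prolong_rel where
  "prolong_rel tau xi ups t x u p q r s w t' x' u' p' q' r' s' w' \<longleftrightarrow>
     Dt tau t x u p * Dx xi t x u q - Dx tau t x u q * Dt xi t x u p \<noteq> 0 \<and>
     t' = tau t x u \<and> x' = xi t x u \<and> u' = ups t x u \<and>
     Dt ups t x u p = p' * Dt tau t x u p + q' * Dt xi t x u p \<and>
     Dx ups t x u q = p' * Dx tau t x u q + q' * Dx xi t x u q \<and>
     Dtt ups t x u p r = r' * (Dt tau t x u p)\<^sup>2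
        + 2 * s' * Dt tau t x u p * Dt xi t x u p + w' * (Dt xi t x u p)\<^sup>2
        + p' * Dtt tau t x u p r + q' * Dtt xi t x u p r \<and>
     Dtx ups t x u p q s = r' * Dt tau t x u p * Dx tau t x u q
        + s' * (Dt tau t x u p * Dx xi t x u q + Dx tau t x u q * Dt xi t x u p)
        + w' * Dt xi t x u p * Dx xi t x u q
        + p' * Dtx tau t x u p q s + q' * Dtx xi t x u p q s \<and>
     Dxx ups t x u q w = r' * (Dx tau t x u q)\<^sup>2
        + 2 * s' * Dx tau t x u q * Dx xi t x u q + w' * (Dx xi t x u q)\<^sup>2
        + p' * Dxx tau t x u q w + q' * Dxx xi t x u q w"

text \<open>The point transformation maps the equation E(A2,C) to E(A2',C'):
  its second prolongation maps the manifold E(A2,C) onto E(A2',C')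
  (wherever the prolongation is defined).\<close>

definition maps_eq where
  "maps_eq tau xi ups A2 C A2' C' \<longleftrightarrow>
     (\<forall>t x u p q r s w t' x' u' p' q' r' s' w'.
        prolong_rel tau xi ups t x u p q r s w t' x' u' p' q' r' s' w' \<longrightarrow>
        (on_eq A2 C t x u p q w \<longleftrightarrow> on_eq A2' C' t' x' u' p' q' w'))"

end

theory Submission
  imports Defs
begin

(* Writing out the second prolongation (Cramer's rule applied to the chain-rule relations), the
   requirement that E(A2, C) be mapped into E(A2', C') must hold identically in the parametric
   derivatives u_tt, u_t, u_x and in u. Independence of u_tt forces tau = T(t); independence of u_t
   gives (Dx xi)^2 A2 = T_t A2' for every value of the total derivative Dx xi, hence xi = X(t, x).
   Splitting in u_x and then in u gives ups = U1(t, x) u + U0(t, x), the transformation rule for C,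
   the Kolmogorov equation for X, U1_x = 0, U1_t = - C U0_x and U0_t = A2 U0_xx. Cross-differentiating
   the last two relations yields U1_t L = U1_tt, with L the expression defining the class L1; as L_x
   never vanishes, U1_t = 0, and U0, U1 are constant. *)

section \<open>Smooth functions\<close>

lemma smooth3_partials:
  assumes "smooth3 F"
  shows "smooth3 (d1 F)" and "smooth3 (d2 F)" and "smooth3 (d3 F)"
  using assms by (cases rule: smooth3.cases, auto)+

lemma smooth2_partials:
  assumes "smooth2 f"
  shows "smooth2 (pt f)" and "smooth2 (px f)"
  using assms by (cases rule: smooth2.cases, auto)+

lemma smooth3_differentiable:
  assumes "smooth3 F"
  shows "(\<lambda>p. F (fst p) (fst (snd p)) (snd (snd p))) differentiable (at p)"
  using assms by (cases rule: smooth3.cases) (metis prod.collapse)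

lemma smooth3_has_partial_derivatives:
  assumes "smooth3 F"
  shows "((\<lambda>s. F s x u) has_real_derivative d1 F t x u) (at t)"
    and "((\<lambda>y. F t y u) has_real_derivative d2 F t x u) (at x)"
    and "((\<lambda>v. F t x v) has_real_derivative d3 F t x u) (at u)"
proof -
  let ?G = "\<lambda>p :: real \<times> real \<times> real. F (fst p) (fst (snd p)) (snd (snd p))"
  have along: "(\<lambda>s. ?G (c s)) differentiable (at s0)"
    if "c differentiable (at s0)" for c :: "real \<Rightarrow> real \<times> real \<times> real" and s0
    using differentiable_chain_at[OF that smooth3_differentiable[OF assms]] by (simp add: comp_def)
  have "(\<lambda>s. F s x u) differentiable (at t)" "(\<lambda>y. F t y u) differentiable (at x)"
    "(\<lambda>v. F t x v) differentiable (at u)"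
    using along[of "\<lambda>s. (s, x, u)"] along[of "\<lambda>y. (t, y, u)"] along[of "\<lambda>v. (t, x, v)"] by simp_all
  then show "((\<lambda>s. F s x u) has_real_derivative d1 F t x u) (at t)"
    and "((\<lambda>y. F t y u) has_real_derivative d2 F t x u) (at x)"
    and "((\<lambda>v. F t x v) has_real_derivative d3 F t x u) (at u)"
    unfolding d1_def d2_def d3_def by (simp_all add: DERIV_deriv_iff_real_differentiable)
qed

lemma smooth2_differentiable:
  assumes "smooth2 f"
  shows "(\<lambda>p. f (fst p) (snd p)) differentiable (at p)"
  using assms by (cases rule: smooth2.cases) (metis prod.collapse)

lemma smooth2_has_partial_derivatives:
  assumes "smooth2 f"
  shows "((\<lambda>s. f s x) has_real_derivative pt f t x) (at t)"
    and "((\<lambda>y. f t y) has_real_derivative px f t x) (at x)"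
proof -
  let ?G = "\<lambda>p :: real \<times> real. f (fst p) (snd p)"
  have along: "(\<lambda>s. ?G (c s)) differentiable (at s0)"
    if "c differentiable (at s0)" for c :: "real \<Rightarrow> real \<times> real" and s0
    using differentiable_chain_at[OF that smooth2_differentiable[OF assms]] by (simp add: comp_def)
  have "(\<lambda>s. f s x) differentiable (at t)" "(\<lambda>y. f t y) differentiable (at x)"
    using along[of "\<lambda>s. (s, x)"] along[of "\<lambda>y. (t, y)"] by simp_all
  then show "((\<lambda>s. f s x) has_real_derivative pt f t x) (at t)"
    and "((\<lambda>y. f t y) has_real_derivative px f t x) (at x)"
    unfolding pt_def px_def by (simp_all add: DERIV_deriv_iff_real_differentiable)
qed

lemma smooth2_differentiable_x:
  assumes "smooth2 f"
  shows "(\<lambda>y. f t y) differentiable (at x)"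
  using smooth2_has_partial_derivatives(2)[OF assms] real_differentiable_def by blast

lemma smooth3_slice2:
  assumes "smooth3 F"
  shows "smooth2 (\<lambda>t x. F t x c)"
proof -
  have "smooth2 f" if "\<exists>F. smooth3 F \<and> f = (\<lambda>t x. F t x c)" for f
    using that
  proof (coinduction arbitrary: f)
    case (smooth2 f)
    then obtain G where G: "smooth3 G" "f = (\<lambda>t x. G t x c)" by blast
    have "(\<lambda>p. f (fst p) (snd p)) differentiable (at p)" for p
    proof -
      have "(\<lambda>p :: real \<times> real. (fst p, snd p, c)) differentiable (at p)"
        by (auto intro!: derivative_eq_intros simp: differentiable_def)
      from differentiable_chain_at[OF this smooth3_differentiable[OF G(1)]] show ?thesis using G(2) by (simp add: comp_def)
    qed
    moreover have "pt f = (\<lambda>t x. d1 G t x c)" "px f = (\<lambda>t x. d2 G t x c)"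
      using G(2) by (auto intro!: ext simp: pt_def px_def d1_def d2_def)
    ultimately show ?case using smooth3_partials[OF G(1)] by blast
  qed
  then show ?thesis using assms by blast
qed

lemma smooth3_slice1:
  assumes "smooth3 F"
  shows "smooth1 (\<lambda>t. F t a b)"
proof -
  have "smooth1 f" if "\<exists>F. smooth3 F \<and> f = (\<lambda>t. F t a b)" for f
    using that
  proof (coinduction arbitrary: f)
    case (smooth1 f)
    then obtain G where G: "smooth3 G" "f = (\<lambda>t. G t a b)" by blast
    have "f differentiable (at t)" for t
      using smooth3_has_partial_derivatives(1)[OF G(1)] G(2) real_differentiable_def by blast
    moreover have "deriv f = (\<lambda>t. d1 G t a b)"
      using G(2) by (simp add: d1_def)
    ultimately show ?case using smooth3_partials[OF G(1)] by blast
  qed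
  then show ?thesis using assms by blast
qed

lemma smooth3_const_in_x:
  assumes "smooth3 F" and "\<And>y. d2 F t y u = 0"
  shows "F t x u = F t y u"
  using DERIV_isconst_all[of "\<lambda>y. F t y u"] smooth3_has_partial_derivatives(2)[OF assms(1)] assms(2)
  by metis

lemma smooth3_const_in_u:
  assumes "smooth3 F" and "\<And>v. d3 F t x v = 0"
  shows "F t x u = F t x v"
  using DERIV_isconst_all[of "\<lambda>v. F t x v"] smooth3_has_partial_derivatives(3)[OF assms(1)] assms(2)
  by metis

lemma smooth2_const_in_t:
  assumes "smooth2 f" and "\<And>s. pt f s x = 0"
  shows "f t x = f s x"
  using DERIV_isconst_all[of "\<lambda>s. f s x"] smooth2_has_partial_derivatives(1)[OF assms(1)] assms(2)
  by metis

lemma smooth2_const_in_x: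
  assumes "smooth2 f" and "\<And>y. px f t y = 0"
  shows "f t x = f t y"
  using DERIV_isconst_all[of "\<lambda>y. f t y"] smooth2_has_partial_derivatives(2)[OF assms(1)] assms(2)
  by metis

lemma smooth2_affine_partials:
  assumes "smooth2 f" and "smooth2 g"
  shows "deriv (\<lambda>s. f s x * u + g s x) t = pt f t x * u + pt g t x"
    and "deriv (\<lambda>y. f t y * u + g t y) x = px f t x * u + px g t x"
  by (intro DERIV_imp_deriv DERIV_add DERIV_cmult_right smooth2_has_partial_derivatives assms)+

lemma mixed_partials_mean_value:
  assumes f: "smooth2 f" and k: "k > 0"
  obtains s1 y1 s2 y2 where "\<bar>s1 - t\<bar> < k" "\<bar>y1 - x\<bar> < k" "\<bar>s2 - t\<bar> < k" "\<bar>y2 - x\<bar> < k"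
    and "px (pt f) s1 y1 = pt (px f) s2 y2"
proof -
  note Dt = smooth2_has_partial_derivatives(1) and Dx = smooth2_has_partial_derivatives(2)
  have "\<exists>s1. t < s1 \<and> s1 < t + k \<and> (f (t + k) (x + k) - f (t + k) x) - (f t (x + k) - f t x)
      = (t + k - t) * (pt f s1 (x + k) - pt f s1 x)"
    by (rule MVT2) (use k in \<open>auto intro!: DERIV_diff Dt[OF f]\<close>)
  then obtain s1 where s1: "t < s1" "s1 < t + k"
    and e1: "(f (t + k) (x + k) - f (t + k) x) - (f t (x + k) - f t x) = k * (pt f s1 (x + k) - pt f s1 x)"
    by auto
  have "\<exists>y1. x < y1 \<and> y1 < x + k \<and> pt f s1 (x + k) - pt f s1 x = (x + k - x) * px (pt f) s1 y1"
    by (rule MVT2) (use k in \<open>auto intro!: Dx[OF smooth2_partials(1)[OF f]]\<close>)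
  then obtain y1 where y1: "x < y1" "y1 < x + k" and e2: "pt f s1 (x + k) - pt f s1 x = k * px (pt f) s1 y1"
    by auto
  have "\<exists>y2. x < y2 \<and> y2 < x + k \<and> (f (t + k) (x + k) - f t (x + k)) - (f (t + k) x - f t x)
      = (x + k - x) * (px f (t + k) y2 - px f t y2)"
    by (rule MVT2) (use k in \<open>auto intro!: DERIV_diff Dx[OF f]\<close>)
  then obtain y2 where y2: "x < y2" "y2 < x + k"
    and e3: "(f (t + k) (x + k) - f t (x + k)) - (f (t + k) x - f t x) = k * (px f (t + k) y2 - px f t y2)"
    by auto
  have "\<exists>s2. t < s2 \<and> s2 < t + k \<and> px f (t + k) y2 - px f t y2 = (t + k - t) * pt (px f) s2 y2"
    by (rule MVT2) (use k in \<open>auto intro!: Dt[OF smooth2_partials(2)[OF f]]\<close>)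
  then obtain s2 where s2: "t < s2" "s2 < t + k" and e4: "px f (t + k) y2 - px f t y2 = k * pt (px f) s2 y2"
    by auto
  have "k * (k * px (pt f) s1 y1) = k * (k * pt (px f) s2 y2)"
    using e1 e2 e3 e4 by (simp add: algebra_simps)
  with k have "px (pt f) s1 y1 = pt (px f) s2 y2" by simp
  with s1 y1 s2 y2 show ?thesis by (intro that) auto
qed

lemma smooth2_mixed_partials_commute:
  assumes f: "smooth2 f"
  shows "pt (px f) t x = px (pt f) t x"
proof (rule ccontr)
  assume ne: "pt (px f) t x \<noteq> px (pt f) t x"
  define e where "e = \<bar>pt (px f) t x - px (pt f) t x\<bar> / 2"
  have e: "e > 0" using ne by (simp add: e_def)
  have cont: "continuous (at (t, x)) (\<lambda>p. g (fst p) (snd p))" if "smooth2 g" for g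
    using smooth2_differentiable[OF that] differentiable_imp_continuous_within by blast
  obtain \<delta>1 where \<delta>1: "\<delta>1 > 0"
    "\<And>p. dist p (t, x) < \<delta>1 \<Longrightarrow> \<bar>pt (px f) (fst p) (snd p) - pt (px f) t x\<bar> < e"
    using cont[OF smooth2_partials(1)[OF smooth2_partials(2)[OF f]]] e
    unfolding continuous_at_eps_delta dist_real_def by (metis fst_conv snd_conv)
  obtain \<delta>2 where \<delta>2: "\<delta>2 > 0"
    "\<And>p. dist p (t, x) < \<delta>2 \<Longrightarrow> \<bar>px (pt f) (fst p) (snd p) - px (pt f) t x\<bar> < e"
    using cont[OF smooth2_partials(2)[OF smooth2_partials(1)[OF f]]] e
    unfolding continuous_at_eps_delta dist_real_def by (metis fst_conv snd_conv)
  define k where "k = min \<delta>1 \<delta>2 / 2"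
  have close: "dist (s, y) (t, x) < min \<delta>1 \<delta>2" if "\<bar>s - t\<bar> < k" "\<bar>y - x\<bar> < k" for s y
    using norm_Pair_le[of "s - t" "y - x"] that by (simp add: dist_norm k_def)
  have "k > 0" using \<delta>1(1) \<delta>2(1) by (simp add: k_def)
  then obtain s1 y1 s2 y2 where "\<bar>s1 - t\<bar> < k" "\<bar>y1 - x\<bar> < k" "\<bar>s2 - t\<bar> < k" "\<bar>y2 - x\<bar> < k"
    and eq: "px (pt f) s1 y1 = pt (px f) s2 y2"
    by (rule mixed_partials_mean_value[OF f])
  then have "\<bar>px (pt f) s1 y1 - px (pt f) t x\<bar> < e" "\<bar>pt (px f) s2 y2 - pt (px f) t x\<bar> < e"
    using \<delta>1(2)[of "(s2, y2)"] \<delta>2(2)[of "(s1, y1)"] close by auto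
  with eq show False by (simp add: e_def abs_if split: if_split_asm)
qed

section \<open>Elementary algebra\<close>

lemma cramer_2x2:
  fixes a b c d A B :: real
  assumes "a * d - c * b \<noteq> 0"
  shows "A = ((A * d - b * B) / (a * d - c * b)) * a + ((a * B - c * A) / (a * d - c * b)) * b"
    and "B = ((A * d - b * B) / (a * d - c * b)) * c + ((a * B - c * A) / (a * d - c * b)) * d"
proof -
  have h: "inverse (a * d - c * b) * (a * d - c * b) = 1" using assms by simp
  show "A = ((A * d - b * B) / (a * d - c * b)) * a + ((a * B - c * A) / (a * d - c * b)) * b"
    unfolding divide_inverse using h by algebra
  show "B = ((A * d - b * B) / (a * d - c * b)) * c + ((a * B - c * A) / (a * d - c * b)) * d"
    unfolding divide_inverse using h by algebra
qed

(* The second-order chain-rule relations form a linear system in (r', s', w') whose matrix is the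
   symmetric square of the matrix [[a, b], [c, d]] of the first-order ones; its determinant is
   (a d - c b)^3. *)
lemma cramer_sym_square:
  fixes a b c d Ha Hb Hc :: real
  assumes "a * d - c * b \<noteq> 0"
  defines "R \<equiv> (d\<^sup>2 * Ha - 2 * b * d * Hb + b\<^sup>2 * Hc) / (a * d - c * b)\<^sup>2"
    and "S \<equiv> (- c * d * Ha + (a * d + b * c) * Hb - a * b * Hc) / (a * d - c * b)\<^sup>2"
    and "W \<equiv> (c\<^sup>2 * Ha - 2 * a * c * Hb + a\<^sup>2 * Hc) / (a * d - c * b)\<^sup>2"
  shows "Ha = R * a\<^sup>2 + 2 * S * a * b + W * b\<^sup>2"
    and "Hb = R * a * c + S * (a * d + c * b) + W * b * d"
    and "Hc = R * c\<^sup>2 + 2 * S * c * d + W * d\<^sup>2"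
proof -
  have h: "inverse ((a * d - c * b)\<^sup>2) * (a * d - c * b)\<^sup>2 = 1" using assms by simp
  show "Ha = R * a\<^sup>2 + 2 * S * a * b + W * b\<^sup>2"
    unfolding R_def S_def W_def divide_inverse using h by algebra
  show "Hb = R * a * c + S * (a * d + c * b) + W * b * d"
    unfolding R_def S_def W_def divide_inverse using h by algebra
  show "Hc = R * c\<^sup>2 + 2 * S * c * d + W * d\<^sup>2"
    unfolding R_def S_def W_def divide_inverse using h by algebra
qed

lemma affine_vanishing_where_nonzero:
  fixes m1 m2 m3 \<alpha> \<beta> :: real
  assumes "m1 \<noteq> 0 \<or> m2 \<noteq> 0 \<or> m3 \<noteq> 0"
    and "\<And>p q. m1 + q * m2 + p * m3 \<noteq> 0 \<Longrightarrow> \<alpha> + q * \<beta> = 0"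
  shows "\<alpha> = 0" and "\<beta> = 0"
proof -
  have good: "\<alpha> + q * \<beta> = 0" if "m1 + q * m2 \<noteq> 0 \<or> m3 \<noteq> 0" for q
  proof (cases "m3 = 0")
    case True
    with that assms(2)[of q 0] show ?thesis by simp
  next
    case False
    then show ?thesis using assms(2)[of q "(1 - m1 - q * m2) / m3"] by simp
  qed
  obtain q0 where off: "m1 + q * m2 \<noteq> 0 \<or> m3 \<noteq> 0" if "q \<noteq> q0" for q
  proof (cases "m2 = 0")
    case True
    with assms(1) show ?thesis by (intro that[of 0]) auto
  next
    case False
    then show ?thesis by (intro that[of "- m1 / m2"]) (auto simp: field_simps)
  qed
  have e: "\<alpha> + (q0 + 1) * \<beta> = 0" "\<alpha> + (q0 + 2) * \<beta> = 0"
    using good off[of "q0 + 1"] off[of "q0 + 2"] by simp_all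
  have "\<beta> = (\<alpha> + (q0 + 2) * \<beta>) - (\<alpha> + (q0 + 1) * \<beta>)" by (simp add: algebra_simps)
  with e show "\<beta> = 0" by simp
  with e show "\<alpha> = 0" by simp
qed

lemma quadratic_identity_coeffs:
  fixes a b c :: real
  assumes "\<And>z. a + b * z + c * z\<^sup>2 = 0"
  shows "a = 0" and "b = 0" and "c = 0"
proof -
  have "a = 0" "a + b + c = 0" "a - b + c = 0"
    using assms[of 0] assms[of 1] assms[of "-1"] by simp_all
  then show "a = 0" "b = 0" "c = 0" by linarith+
qed

section \<open>The second prolongation\<close>

(* The solution of the relations of prolong_rel for (p', q', r', s', w'); prolong_h_tt, prolong_h_tx
   and prolong_h_xx are the second-order relations with the first-order terms moved to the left. *)
definition prolong_det where
  "prolong_det tau xi t x u p q = Dt tau t x u p * Dx xi t x u q - Dx tau t x u q * Dt xi t x u p"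

definition prolong_p where
  "prolong_p tau xi ups t x u p q =
     (Dt ups t x u p * Dx xi t x u q - Dt xi t x u p * Dx ups t x u q) / prolong_det tau xi t x u p q"

definition prolong_q where
  "prolong_q tau xi ups t x u p q =
     (Dt tau t x u p * Dx ups t x u q - Dx tau t x u q * Dt ups t x u p) / prolong_det tau xi t x u p q"

definition prolong_h_tt where
  "prolong_h_tt tau xi ups t x u p q r = Dtt ups t x u p r
     - prolong_p tau xi ups t x u p q * Dtt tau t x u p r - prolong_q tau xi ups t x u p q * Dtt xi t x u p r"

definition prolong_h_tx where
  "prolong_h_tx tau xi ups t x u p q s = Dtx ups t x u p q s
     - prolong_p tau xi ups t x u p q * Dtx tau t x u p q s - prolong_q tau xi ups t x u p q * Dtx xi t x u p q s"

definition prolong_h_xx where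
  "prolong_h_xx tau xi ups t x u p q w = Dxx ups t x u q w
     - prolong_p tau xi ups t x u p q * Dxx tau t x u q w - prolong_q tau xi ups t x u p q * Dxx xi t x u q w"

definition prolong_r where
  "prolong_r tau xi ups t x u p q r s w =
     ((Dx xi t x u q)\<^sup>2 * prolong_h_tt tau xi ups t x u p q r
      - 2 * Dt xi t x u p * Dx xi t x u q * prolong_h_tx tau xi ups t x u p q s
      + (Dt xi t x u p)\<^sup>2 * prolong_h_xx tau xi ups t x u p q w) / (prolong_det tau xi t x u p q)\<^sup>2"

definition prolong_s where
  "prolong_s tau xi ups t x u p q r s w =
     (- Dx tau t x u q * Dx xi t x u q * prolong_h_tt tau xi ups t x u p q r
      + (Dt tau t x u p * Dx xi t x u q + Dt xi t x u p * Dx tau t x u q) * prolong_h_tx tau xi ups t x u p q s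
      - Dt tau t x u p * Dt xi t x u p * prolong_h_xx tau xi ups t x u p q w) / (prolong_det tau xi t x u p q)\<^sup>2"

definition prolong_w where
  "prolong_w tau xi ups t x u p q r s w =
     ((Dx tau t x u q)\<^sup>2 * prolong_h_tt tau xi ups t x u p q r
      - 2 * Dt tau t x u p * Dx tau t x u q * prolong_h_tx tau xi ups t x u p q s
      + (Dt tau t x u p)\<^sup>2 * prolong_h_xx tau xi ups t x u p q w) / (prolong_det tau xi t x u p q)\<^sup>2"

lemma prolong_rel_prolong:
  assumes "prolong_det tau xi t x u p q \<noteq> 0"
  shows "prolong_rel tau xi ups t x u p q r s w (tau t x u) (xi t x u) (ups t x u)
     (prolong_p tau xi ups t x u p q) (prolong_q tau xi ups t x u p q)
     (prolong_r tau xi ups t x u p q r s w) (prolong_s tau xi ups t x u p q r s w)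
     (prolong_w tau xi ups t x u p q r s w)"
proof -
  have det: "Dt tau t x u p * Dx xi t x u q - Dx tau t x u q * Dt xi t x u p \<noteq> 0"
    using assms by (simp add: prolong_det_def)
  note first = cramer_2x2[OF det, where A = "Dt ups t x u p" and B = "Dx ups t x u q",
      folded prolong_det_def[of tau xi t x u p q], folded prolong_p_def prolong_q_def]
  note second = cramer_sym_square[OF det, where Ha = "prolong_h_tt tau xi ups t x u p q r"
      and Hb = "prolong_h_tx tau xi ups t x u p q s" and Hc = "prolong_h_xx tau xi ups t x u p q w",
      folded prolong_det_def[of tau xi t x u p q], folded prolong_r_def prolong_s_def prolong_w_def]
  show ?thesis
    unfolding prolong_rel_def
    using det first second prolong_h_tt_def[of tau xi ups t x u p q r]
      prolong_h_tx_def[of tau xi ups t x u p q s] prolong_h_xx_def[of tau xi ups t x u p q w]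
    by (intro conjI) linarith+
qed

lemma prolong_det_affine:
  "prolong_det tau xi t x u p q =
     (d1 tau t x u * d2 xi t x u - d2 tau t x u * d1 xi t x u)
     + q * (d1 tau t x u * d3 xi t x u - d3 tau t x u * d1 xi t x u)
     + p * (d3 tau t x u * d2 xi t x u - d2 tau t x u * d3 xi t x u)"
  by (simp add: prolong_det_def Dt_def Dx_def algebra_simps)

lemma jacobian3_minors:
  "jacobian3 tau xi ups t x u =
     d3 ups t x u * (d1 tau t x u * d2 xi t x u - d2 tau t x u * d1 xi t x u)
     - d2 ups t x u * (d1 tau t x u * d3 xi t x u - d3 tau t x u * d1 xi t x u)
     - d1 ups t x u * (d3 tau t x u * d2 xi t x u - d2 tau t x u * d3 xi t x u)"
  by (simp add: jacobian3_def algebra_simps)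

lemma prolong_contact_factor:
  assumes "prolong_det tau xi t x u p q \<noteq> 0"
  shows "(d3 ups t x u - prolong_p tau xi ups t x u p q * d3 tau t x u - prolong_q tau xi ups t x u p q * d3 xi t x u)
     * prolong_det tau xi t x u p q = jacobian3 tau xi ups t x u"
proof -
  have "inverse (prolong_det tau xi t x u p q) * prolong_det tau xi t x u p q = 1" using assms by simp
  then show ?thesis
    unfolding prolong_p_def prolong_q_def divide_inverse
    by (simp add: jacobian3_def prolong_det_def Dt_def Dx_def) algebra
qed

lemma prolong_w_diff_r:
  assumes "prolong_det tau xi t x u p q \<noteq> 0"
  shows "prolong_w tau xi ups t x u p q r' s w - prolong_w tau xi ups t x u p q r s w
     = (r' - r) * (Dx tau t x u q)\<^sup>2 * jacobian3 tau xi ups t x u / (prolong_det tau xi t x u p q)^3"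
proof -
  let ?K = "d3 ups t x u - prolong_p tau xi ups t x u p q * d3 tau t x u - prolong_q tau xi ups t x u p q * d3 xi t x u"
  have h: "prolong_h_tt tau xi ups t x u p q r' = prolong_h_tt tau xi ups t x u p q r + (r' - r) * ?K"
    by (simp add: prolong_h_tt_def Dtt_def algebra_simps)
  have "prolong_w tau xi ups t x u p q r' s w - prolong_w tau xi ups t x u p q r s w
      = (r' - r) * (Dx tau t x u q)\<^sup>2 * ?K / (prolong_det tau xi t x u p q)\<^sup>2"
    unfolding prolong_w_def h by (simp add: diff_divide_distrib[symmetric] algebra_simps)
  also have "?K = jacobian3 tau xi ups t x u / prolong_det tau xi t x u p q"
    using prolong_contact_factor[OF assms, of ups] assms by (simp add: eq_divide_eq)
  finally show ?thesis using assms by (simp add: power3_eq_cube power2_eq_square)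
qed

section \<open>Point equivalences between equations of the class L\<close>

locale L_equivalence =
  fixes A2 C A2' C' :: "real \<Rightarrow> real \<Rightarrow> real"
    and tau xi ups :: "real \<Rightarrow> real \<Rightarrow> real \<Rightarrow> real"
  assumes source: "in_class_L A2 C" and target: "in_class_L A2' C'"
    and transformation: "point_transformation tau xi ups"
    and maps: "maps_eq tau xi ups A2 C A2' C'"
begin

lemma A2_nonzero: "A2 t x \<noteq> 0" and C_nonzero: "C t x \<noteq> 0"
  and A2'_nonzero: "A2' t x \<noteq> 0" and C'_nonzero: "C' t x \<noteq> 0"
  using source target by (auto simp: in_class_L_def)

lemma smooth_A2: "smooth2 A2" and smooth_C: "smooth2 C"
  using source by (auto simp: in_class_L_def)

lemma smooth_tau: "smooth3 tau" and smooth_xi: "smooth3 xi" and smooth_ups: "smooth3 ups"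
  and jacobian_nonzero: "jacobian3 tau xi ups t x u \<noteq> 0"
  using transformation by (auto simp: point_transformation_def)

lemma on_eq_iff_on_eq_image:
  assumes "prolong_det tau xi t x u p q \<noteq> 0"
  shows "on_eq A2 C t x u p q w \<longleftrightarrow> on_eq A2' C' (tau t x u) (xi t x u) (ups t x u)
     (prolong_p tau xi ups t x u p q) (prolong_q tau xi ups t x u p q) (prolong_w tau xi ups t x u p q r s w)"
  using maps prolong_rel_prolong[OF assms] unfolding maps_eq_def by blast

lemma image_on_target:
  assumes "prolong_det tau xi t x u p q \<noteq> 0"
  shows "prolong_p tau xi ups t x u p q + C' (tau t x u) (xi t x u) * ups t x u * prolong_q tau xi ups t x u p q
    = A2' (tau t x u) (xi t x u) * prolong_w tau xi ups t x u p q r s ((p + C t x * u * q) / A2 t x)"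
proof -
  have "on_eq A2 C t x u p q ((p + C t x * u * q) / A2 t x)"
    using A2_nonzero[of t x] by (simp add: on_eq_def)
  then show ?thesis
    using on_eq_iff_on_eq_image[OF assms, where w = "(p + C t x * u * q) / A2 t x" and r = r and s = s]
    by (simp add: on_eq_def)
qed

(* On E', w' is determined by (p', q'), and these do not depend on u_tt. *)
lemma Dx_tau_zero:
  assumes det: "prolong_det tau xi t x u p q \<noteq> 0"
  shows "Dx tau t x u q = 0"
proof -
  define w where "w = (p + C t x * u * q) / A2 t x"
  have "A2' (tau t x u) (xi t x u) * prolong_w tau xi ups t x u p q 1 0 w
      = A2' (tau t x u) (xi t x u) * prolong_w tau xi ups t x u p q 0 0 w"
    using image_on_target[OF det, of 1 0] image_on_target[OF det, of 0 0] unfolding w_def by linarith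
  then have "prolong_w tau xi ups t x u p q 1 0 w - prolong_w tau xi ups t x u p q 0 0 w = 0"
    using A2'_nonzero by simp
  then show ?thesis
    using prolong_w_diff_r[OF det, of ups 1 0 w] jacobian_nonzero[of t x u] det by simp
qed

lemma tau_x_zero: "d2 tau t x u = 0" and tau_u_zero: "d3 tau t x u = 0"
proof -
  let ?m1 = "d1 tau t x u * d2 xi t x u - d2 tau t x u * d1 xi t x u"
    and ?m2 = "d1 tau t x u * d3 xi t x u - d3 tau t x u * d1 xi t x u"
    and ?m3 = "d3 tau t x u * d2 xi t x u - d2 tau t x u * d3 xi t x u"
  have minors: "?m1 \<noteq> 0 \<or> ?m2 \<noteq> 0 \<or> ?m3 \<noteq> 0"
    using jacobian_nonzero[of t x u] unfolding jacobian3_minors by auto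
  have vanishing: "d2 tau t x u + q * d3 tau t x u = 0" if "?m1 + q * ?m2 + p * ?m3 \<noteq> 0" for p q
    using Dx_tau_zero[of t x u p q] that unfolding prolong_det_affine by (simp add: Dx_def)
  show "d2 tau t x u = 0" by (rule affine_vanishing_where_nonzero(1)[OF minors], erule vanishing)
  show "d3 tau t x u = 0" by (rule affine_vanishing_where_nonzero(2)[OF minors], erule vanishing)
qed

definition T :: "real \<Rightarrow> real" where
  "T t = tau t 0 0"

lemma tau_eq: "tau t x u = T t"
proof -
  have "tau t x u = tau t 0 u" by (rule smooth3_const_in_x[OF smooth_tau]) (rule tau_x_zero)
  also have "\<dots> = tau t 0 0" by (rule smooth3_const_in_u[OF smooth_tau]) (rule tau_u_zero)
  finally show ?thesis by (simp add: T_def)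
qed

lemma tau_partials: "d1 tau t x u = deriv T t" "d2 tau = (\<lambda>t x u. 0)" "d3 tau = (\<lambda>t x u. 0)"
  by (auto intro!: ext simp: d1_def d2_def d3_def tau_eq)

lemma tau_total_derivatives: "Dt tau t x u p = deriv T t" "Dx tau t x u q = 0" "Dxx tau t x u q w = 0"
  by (simp_all add: Dt_def Dx_def Dxx_def tau_partials d2_def d3_def)

lemma jacobian_eq:
  "jacobian3 tau xi ups t x u = deriv T t * (d2 xi t x u * d3 ups t x u - d3 xi t x u * d2 ups t x u)"
  by (simp add: jacobian3_def tau_partials)

lemma T'_nonzero: "deriv T t \<noteq> 0"
  and xi_ups_minor_nonzero: "d2 xi t x u * d3 ups t x u - d3 xi t x u * d2 ups t x u \<noteq> 0"
  using jacobian_nonzero[of t x u] unfolding jacobian_eq by auto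

lemma prolong_det_eq: "prolong_det tau xi t x u p q = deriv T t * Dx xi t x u q"
  by (simp add: prolong_det_def tau_total_derivatives)

lemma prolong_p_eq: "prolong_p tau xi ups t x u p q
    = (Dt ups t x u p * Dx xi t x u q - Dt xi t x u p * Dx ups t x u q) / (deriv T t * Dx xi t x u q)"
  by (simp add: prolong_p_def prolong_det_eq)

lemma prolong_q_eq:
  assumes "Dx xi t x u q \<noteq> 0"
  shows "prolong_q tau xi ups t x u p q = Dx ups t x u q / Dx xi t x u q"
  using T'_nonzero[of t] by (simp add: prolong_q_def prolong_det_eq tau_total_derivatives)

lemma prolong_w_eq:
  assumes "Dx xi t x u q \<noteq> 0"
  shows "prolong_w tau xi ups t x u p q r s w
    = (Dxx ups t x u q w - prolong_q tau xi ups t x u p q * Dxx xi t x u q w) / (Dx xi t x u q)\<^sup>2"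
proof -
  have "prolong_w tau xi ups t x u p q r s w
      = (deriv T t)\<^sup>2 * prolong_h_xx tau xi ups t x u p q w / (deriv T t * Dx xi t x u q)\<^sup>2"
    by (simp add: prolong_w_def prolong_det_eq tau_total_derivatives)
  also have "\<dots> = prolong_h_xx tau xi ups t x u p q w / (Dx xi t x u q)\<^sup>2"
    using T'_nonzero[of t] by (simp add: power_mult_distrib)
  finally show ?thesis by (simp add: prolong_h_xx_def tau_total_derivatives)
qed

lemma prolong_p_diff:
  assumes "Dx xi t x u q \<noteq> 0"
  shows "prolong_p tau xi ups t x u p' q - prolong_p tau xi ups t x u p q
    = (p' - p) * (d3 ups t x u - prolong_q tau xi ups t x u p q * d3 xi t x u) / deriv T t"
  using assms T'_nonzero[of t]
  by (simp add: prolong_p_eq prolong_q_eq Dt_def diff_divide_distrib[symmetric] field_simps)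

lemma prolong_w_diff:
  assumes "Dx xi t x u q \<noteq> 0"
  shows "prolong_w tau xi ups t x u p' q r' s' w' - prolong_w tau xi ups t x u p q r s w
    = (w' - w) * (d3 ups t x u - prolong_q tau xi ups t x u p q * d3 xi t x u) / (Dx xi t x u q)\<^sup>2"
  using assms
  by (simp add: prolong_w_eq prolong_q_eq Dxx_def diff_divide_distrib[symmetric]
      add_divide_distrib[symmetric] algebra_simps)

(* Compare the images of the points of E with u_t = 1 and u_t = 0: p' changes by k / T' and w' by
   k / (A2 (Dx xi)^2), with k = d3 ups - q' d3 xi nonzero by the Jacobian condition. *)
lemma A2'_transform:
  assumes dx: "Dx xi t x u q \<noteq> 0"
  shows "(Dx xi t x u q)\<^sup>2 * A2 t x = deriv T t * A2' (T t) (xi t x u)"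
proof -
  define k where "k = d3 ups t x u - prolong_q tau xi ups t x u 0 q * d3 xi t x u"
  define w where "w p = (p + C t x * u * q) / A2 t x" for p
  have "Dx xi t x u q * k = Dx xi t x u q * d3 ups t x u - Dx ups t x u q * d3 xi t x u"
    using dx by (simp add: k_def prolong_q_eq algebra_simps)
  also have "\<dots> = d2 xi t x u * d3 ups t x u - d3 xi t x u * d2 ups t x u"
    by (simp add: Dx_def algebra_simps)
  finally have k: "k \<noteq> 0" using xi_ups_minor_nonzero[of t x u] by auto
  have image: "prolong_p tau xi ups t x u p q + C' (T t) (xi t x u) * ups t x u * Dx ups t x u q / Dx xi t x u q
      = A2' (T t) (xi t x u) * prolong_w tau xi ups t x u p q 0 0 (w p)" for p
    using image_on_target[of t x u p q 0 0] dx T'_nonzero[of t]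
    by (simp add: w_def tau_eq prolong_det_eq prolong_q_eq)
  have "k / deriv T t = prolong_p tau xi ups t x u 1 q - prolong_p tau xi ups t x u 0 q"
    using prolong_p_diff[OF dx, of 1 0] by (simp add: k_def)
  also have "\<dots> = A2' (T t) (xi t x u) * (prolong_w tau xi ups t x u 1 q 0 0 (w 1)
      - prolong_w tau xi ups t x u 0 q 0 0 (w 0))"
    using image[of 1] image[of 0] by (simp add: right_diff_distrib)
  also have "\<dots> = A2' (T t) (xi t x u) * (k / (A2 t x * (Dx xi t x u q)\<^sup>2))"
    using prolong_w_diff[OF dx, of 1 0 0 "w 1" 0 0 0 "w 0"]
    by (simp add: k_def w_def diff_divide_distrib[symmetric])
  finally show ?thesis
    using k dx T'_nonzero[of t] A2_nonzero[of t x] by (simp add: field_simps)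
qed

(* Otherwise Dx xi takes both values 1 and 2 at (t, x, u), and A2'_transform gives A2 = 4 A2. *)
lemma xi_u_zero: "d3 xi t x u = 0"
proof (rule ccontr)
  assume nz: "d3 xi t x u \<noteq> 0"
  have "Dx xi t x u ((c - d2 xi t x u) / d3 xi t x u) = c" for c
    using nz by (simp add: Dx_def)
  then have "A2 t x = 4 * A2 t x"
    using A2'_transform[of t x u "(1 - d2 xi t x u) / d3 xi t x u"]
      A2'_transform[of t x u "(2 - d2 xi t x u) / d3 xi t x u"] by simp
  then show False using A2_nonzero[of t x] by simp
qed

definition X :: "real \<Rightarrow> real \<Rightarrow> real" where
  "X t x = xi t x 0"

lemma xi_eq: "xi t x u = X t x"
  unfolding X_def by (rule smooth3_const_in_u[OF smooth_xi]) (rule xi_u_zero)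

lemma xi_partials: "d1 xi t x u = pt X t x" "d2 xi = (\<lambda>t x u. px X t x)" "d3 xi = (\<lambda>t x u. 0)"
  by (auto intro!: ext simp: d1_def d2_def d3_def pt_def px_def xi_eq)

lemma xi_total_derivatives:
  "Dt xi t x u p = pt X t x" "Dx xi t x u q = px X t x" "Dxx xi t x u q w = px (px X) t x"
  by (simp_all add: Dt_def Dx_def Dxx_def xi_partials d2_def d3_def px_def)

lemma X_x_nonzero: "px X t x \<noteq> 0" and ups_u_nonzero: "d3 ups t x u \<noteq> 0"
  using xi_ups_minor_nonzero[of t x u] by (auto simp: xi_partials)

lemma A2'_eq: "A2' (T t) (X t x) = (px X t x)\<^sup>2 / deriv T t * A2 t x"
proof -
  have "(px X t x)\<^sup>2 * A2 t x = deriv T t * A2' (T t) (X t x)"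
    using A2'_transform[of t x 0 0] X_x_nonzero[of t x] by (simp add: xi_total_derivatives xi_eq)
  then show ?thesis using T'_nonzero[of t] by (simp add: eq_divide_eq ac_simps)
qed

(* The image condition at u_t = 0, multiplied by T' X_x, with u_xx taken from the source equation;
   it is a polynomial identity in u_x = q. *)
lemma determining_equation:
  "(d1 ups t x u * px X t x - pt X t x * d2 ups t x u
     + deriv T t * C' (T t) (X t x) * ups t x u * d2 ups t x u
     - A2 t x * px X t x * d2 (d2 ups) t x u + A2 t x * d2 ups t x u * px (px X) t x)
   + (- pt X t x * d3 ups t x u
     + deriv T t * C' (T t) (X t x) * ups t x u * d3 ups t x u - 2 * A2 t x * px X t x * d2 (d3 ups) t x u
     - px X t x * C t x * u * d3 ups t x u + A2 t x * d3 ups t x u * px (px X) t x) * q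
   + (- A2 t x * px X t x * d3 (d3 ups) t x u) * q\<^sup>2 = 0"
proof -
  define a where "a = deriv T t"
  define d where "d = px X t x"
  define w where "w = (0 + C t x * u * q) / A2 t x"
  have a: "a \<noteq> 0" unfolding a_def by (rule T'_nonzero)
  have d: "d \<noteq> 0" unfolding d_def by (rule X_x_nonzero)
  have dx: "Dx xi t x u q \<noteq> 0" using d by (simp add: xi_total_derivatives d_def)
  have det: "prolong_det tau xi t x u 0 q \<noteq> 0"
    using a d by (simp add: prolong_det_eq xi_total_derivatives a_def d_def)
  have "prolong_p tau xi ups t x u 0 q + C' (T t) (X t x) * ups t x u * prolong_q tau xi ups t x u 0 q
      = A2' (T t) (X t x) * prolong_w tau xi ups t x u 0 q 0 0 w"
    using image_on_target[OF det, of 0 0] by (simp add: w_def tau_eq xi_eq)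
  then have image: "(d1 ups t x u * d - pt X t x * Dx ups t x u q) / (a * d)
      + C' (T t) (X t x) * ups t x u * (Dx ups t x u q / d)
      = d\<^sup>2 / a * A2 t x * ((d2 (d2 ups) t x u + 2 * q * d2 (d3 ups) t x u + q\<^sup>2 * d3 (d3 ups) t x u
          + w * d3 ups t x u - Dx ups t x u q / d * px (px X) t x) / d\<^sup>2)"
    unfolding prolong_p_eq prolong_q_eq[OF dx] prolong_w_eq[OF dx] A2'_eq xi_total_derivatives
    by (simp add: Dt_def Dxx_def a_def d_def)
  have "d1 ups t x u * d - pt X t x * Dx ups t x u q + a * C' (T t) (X t x) * ups t x u * Dx ups t x u q
      = A2 t x * d * (d2 (d2 ups) t x u + 2 * q * d2 (d3 ups) t x u + q\<^sup>2 * d3 (d3 ups) t x u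
          + w * d3 ups t x u) - A2 t x * Dx ups t x u q * px (px X) t x"
  proof -
    have "inverse a * a = 1" "inverse d * d = 1" using a d by simp_all
    moreover have "inverse (d\<^sup>2) = inverse d * inverse d" by (simp add: power2_eq_square)
    ultimately show ?thesis using image unfolding divide_inverse inverse_mult_distrib by algebra
  qed
  moreover have "inverse (A2 t x) * A2 t x = 1" using A2_nonzero[of t x] by simp
  ultimately show ?thesis unfolding w_def a_def d_def divide_inverse Dx_def by algebra
qed

lemma ups_uu_zero: "d3 (d3 ups) t x u = 0"
  and determining_q1: "- pt X t x * d3 ups t x u
     + deriv T t * C' (T t) (X t x) * ups t x u * d3 ups t x u - 2 * A2 t x * px X t x * d2 (d3 ups) t x u
     - px X t x * C t x * u * d3 ups t x u + A2 t x * d3 ups t x u * px (px X) t x = 0"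
  and determining_q0: "d1 ups t x u * px X t x - pt X t x * d2 ups t x u
     + deriv T t * C' (T t) (X t x) * ups t x u * d2 ups t x u
     - A2 t x * px X t x * d2 (d2 ups) t x u + A2 t x * d2 ups t x u * px (px X) t x = 0"
  using quadratic_identity_coeffs[OF determining_equation[of t x u]] A2_nonzero[of t x] X_x_nonzero[of t x]
  by simp_all

definition U1 :: "real \<Rightarrow> real \<Rightarrow> real" where
  "U1 t x = d3 ups t x 0"

definition U0 :: "real \<Rightarrow> real \<Rightarrow> real" where
  "U0 t x = ups t x 0"

lemma ups_u_eq: "d3 ups t x u = U1 t x"
  unfolding U1_def by (rule smooth3_const_in_u[OF smooth3_partials(3)[OF smooth_ups]]) (rule ups_uu_zero)

lemma ups_eq: "ups t x u = U1 t x * u + U0 t x"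
proof -
  have "((\<lambda>v. ups t x v - U1 t x * v) has_real_derivative d3 ups t x v - U1 t x * 1) (at v)" for v
    by (intro DERIV_diff DERIV_cmult smooth3_has_partial_derivatives(3)[OF smooth_ups] DERIV_ident)
  then have "((\<lambda>v. ups t x v - U1 t x * v) has_real_derivative 0) (at v)" for v
    by (simp add: ups_u_eq)
  then have "ups t x u - U1 t x * u = ups t x 0 - U1 t x * 0"
    by (rule DERIV_isconst_all[rule_format])
  then show ?thesis by (simp add: U0_def)
qed

lemma smooth_U1: "smooth2 U1" and smooth_U0: "smooth2 U0"
proof -
  have "U1 = (\<lambda>t x. d3 ups t x 0)" "U0 = (\<lambda>t x. ups t x 0)" by (simp_all add: U1_def U0_def fun_eq_iff)
  then show "smooth2 U1" "smooth2 U0"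
    using smooth3_slice2[OF smooth3_partials(3)[OF smooth_ups]] smooth3_slice2[OF smooth_ups] by simp_all
qed

lemma ups_partials:
  "d1 ups t x u = pt U1 t x * u + pt U0 t x"
  "d2 ups t x u = px U1 t x * u + px U0 t x"
  "d2 (d2 ups) t x u = px (px U1) t x * u + px (px U0) t x"
  "d2 (d3 ups) t x u = px U1 t x"
proof -
  show "d1 ups t x u = pt U1 t x * u + pt U0 t x"
    using smooth2_affine_partials(1)[OF smooth_U1 smooth_U0] by (simp add: d1_def ups_eq)
  have "d2 ups t x u = px U1 t x * u + px U0 t x" for t x u
    using smooth2_affine_partials(2)[OF smooth_U1 smooth_U0] by (simp add: d2_def ups_eq)
  then show "d2 ups t x u = px U1 t x * u + px U0 t x"
    and "d2 (d2 ups) t x u = px (px U1) t x * u + px (px U0) t x"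
    using smooth2_affine_partials(2)[OF smooth2_partials(2)[OF smooth_U1] smooth2_partials(2)[OF smooth_U0]]
    by (simp_all add: d2_def[of "d2 ups"])
  show "d2 (d3 ups) t x u = px U1 t x"
    by (simp add: d2_def px_def ups_u_eq)
qed

lemma U1_nonzero: "U1 t x \<noteq> 0"
  using ups_u_nonzero[of t x 0] by (simp add: ups_u_eq)

lemma determining_q1_in_u:
  "(- pt X t x * U1 t x + deriv T t * C' (T t) (X t x) * U0 t x * U1 t x
      - 2 * A2 t x * px X t x * px U1 t x + A2 t x * U1 t x * px (px X) t x)
    + (U1 t x * (deriv T t * C' (T t) (X t x) * U1 t x - px X t x * C t x)) * u + 0 * u\<^sup>2 = 0"
  using determining_q1[of t x u] by (simp add: ups_partials ups_u_eq ups_eq algebra_simps)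

lemma C'_transform: "deriv T t * C' (T t) (X t x) * U1 t x = px X t x * C t x"
  using quadratic_identity_coeffs(2)[OF determining_q1_in_u[of t x]] U1_nonzero[of t x] by simp

lemma determining_q0_in_u:
  "(pt U0 t x * px X t x - pt X t x * px U0 t x + deriv T t * C' (T t) (X t x) * U0 t x * px U0 t x
      - A2 t x * px X t x * px (px U0) t x + A2 t x * px U0 t x * px (px X) t x)
    + (pt U1 t x * px X t x - pt X t x * px U1 t x
      + deriv T t * C' (T t) (X t x) * (U1 t x * px U0 t x + U0 t x * px U1 t x)
      - A2 t x * px X t x * px (px U1) t x + A2 t x * px U1 t x * px (px X) t x) * u
    + (deriv T t * C' (T t) (X t x) * U1 t x * px U1 t x) * u\<^sup>2 = 0"
  using determining_q0[of t x u] by (simp add: ups_partials ups_eq algebra_simps power2_eq_square)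

lemma U1_x_zero: "px U1 t x = 0"
  using quadratic_identity_coeffs(3)[OF determining_q0_in_u[of t x]]
    T'_nonzero[of t] C'_nonzero[of "T t" "X t x"] U1_nonzero[of t x]
  by simp

lemma X_t_eq: "pt X t x = deriv T t * C' (T t) (X t x) * U0 t x + A2 t x * px (px X) t x"
proof -
  have "U1 t x * pt X t x = U1 t x * (deriv T t * C' (T t) (X t x) * U0 t x + A2 t x * px (px X) t x)"
    using quadratic_identity_coeffs(1)[OF determining_q1_in_u[of t x]] by (simp add: U1_x_zero algebra_simps)
  then show ?thesis using U1_nonzero[of t x] by simp
qed

lemma kolmogorov: "pt X t x = A2 t x * px (px X) t x + U0 t x * C t x / U1 t x * px X t x"
proof -
  have "deriv T t * C' (T t) (X t x) = px X t x * C t x / U1 t x"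
    using C'_transform[of t x] U1_nonzero[of t x] by (simp add: eq_divide_eq)
  then show ?thesis unfolding X_t_eq by (simp add: algebra_simps)
qed

lemma U1_t_eq: "pt U1 t x = - C t x * px U0 t x"
proof -
  have "px (px U1) t x = 0" using U1_x_zero by (simp add: px_def)
  then have "pt U1 t x * px X t x + deriv T t * C' (T t) (X t x) * U1 t x * px U0 t x = 0"
    using quadratic_identity_coeffs(2)[OF determining_q0_in_u[of t x]] by (simp add: U1_x_zero algebra_simps)
  then have "px X t x * (pt U1 t x + C t x * px U0 t x) = 0"
    unfolding C'_transform by (simp add: algebra_simps)
  then have "pt U1 t x + C t x * px U0 t x = 0" using X_x_nonzero[of t x] by simp
  then show ?thesis by linarith
qed

lemma U0_t_eq: "pt U0 t x = A2 t x * px (px U0) t x"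
proof -
  have "px X t x * (pt U0 t x - A2 t x * px (px U0) t x) = 0"
    using quadratic_identity_coeffs(1)[OF determining_q0_in_u[of t x]] unfolding X_t_eq
    by (simp add: algebra_simps)
  then show ?thesis using X_x_nonzero[of t x] by simp
qed

end

locale L1_equivalence = L_equivalence +
  assumes source_L1: "\<And>t x. px (L1_expr A2 C) t x \<noteq> 0"
begin

lemma U1_t_indep_x: "pt U1 t x = pt U1 t 0"
proof -
  have "U1 s x = U1 s 0" for s by (rule smooth2_const_in_x[OF smooth_U1]) (rule U1_x_zero)
  then show ?thesis by (simp add: pt_def)
qed

(* Cross-differentiating U0_x = - U1_t / C and U0_t = A2 U0_xx gives U1_t * L1_expr = U1_tt, where
   neither U1_t nor U1_tt depends on x. *)
lemma U1_t_zero: "pt U1 t x = 0"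
proof (rule ccontr)
  define v1 where "v1 = pt U1 t 0"
  define v2 where "v2 = pt (pt U1) t 0"
  define K where "K t' x' = A2 t' x' * px C t' x' / (C t' x')\<^sup>2" for t' x'
  assume "pt U1 t x \<noteq> 0"
  then have v1: "v1 \<noteq> 0" using U1_t_indep_x[of t x] unfolding v1_def by simp
  have U0_x: "px U0 s y = - (pt U1 s 0 / C s y)" for s y
    using U1_t_eq[of s y] U1_t_indep_x[of s y] C_nonzero[of s y] by (simp add: field_simps)
  have "v1 * L1_expr A2 C t y = v2" for y
  proof -
    have "((\<lambda>s. pt U1 s 0 / C s y) has_real_derivative (v2 * C t y - v1 * pt C t y) / (C t y * C t y)) (at t)"
      unfolding v1_def v2_def
      by (intro DERIV_divide smooth2_has_partial_derivatives(1) smooth2_partials(1) smooth_U1 smooth_C C_nonzero)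
    then have U0_xt: "pt (px U0) t y = - ((v2 * C t y - v1 * pt C t y) / (C t y * C t y))"
      unfolding pt_def[of "px U0"] U0_x by (intro DERIV_imp_deriv DERIV_minus)
    have "((\<lambda>z. pt U1 t 0 / C t z) has_real_derivative (0 * C t z - pt U1 t 0 * px C t z) / (C t z * C t z)) (at z)"
      for z by (intro DERIV_divide DERIV_const smooth2_has_partial_derivatives(2) smooth_C C_nonzero)
    then have "px (px U0) t z = - ((0 * C t z - pt U1 t 0 * px C t z) / (C t z * C t z))" for z
      unfolding px_def[of "px U0"] U0_x by (intro DERIV_imp_deriv DERIV_minus)
    then have U0_t: "pt U0 t z = v1 * K t z" for z
      by (simp add: U0_t_eq K_def v1_def power2_eq_square)
    have "(\<lambda>z. K t z) differentiable (at y)"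
      unfolding K_def using C_nonzero[of t y]
      by (intro differentiable_divide differentiable_mult differentiable_power smooth2_differentiable_x
          smooth_A2 smooth_C smooth2_partials(2)) simp
    then have U0_tx: "px (pt U0) t y = v1 * px K t y"
      unfolding px_def[of "pt U0"] U0_t px_def[of K]
      by (intro DERIV_imp_deriv DERIV_cmult) (simp add: DERIV_deriv_iff_real_differentiable)
    have "pt (px U0) t y = px (pt U0) t y" by (rule smooth2_mixed_partials_commute[OF smooth_U0])
    then have "v1 * (pt C t y / C t y - C t y * px K t y) = v2"
      unfolding U0_xt U0_tx using C_nonzero[of t y] by (simp add: field_simps)
    then show ?thesis unfolding L1_expr_def K_def by simp
  qed
  then have "L1_expr A2 C t y = v2 / v1" for y using v1 by (simp add: field_simps)
  then have "px (L1_expr A2 C) t 0 = 0" by (simp add: px_def)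
  with source_L1 show False by blast
qed

lemma U1_const: "U1 t x = U1 0 0"
proof -
  have "U1 t x = U1 t 0" by (rule smooth2_const_in_x[OF smooth_U1]) (rule U1_x_zero)
  also have "\<dots> = U1 0 0" by (rule smooth2_const_in_t[OF smooth_U1]) (rule U1_t_zero)
  finally show ?thesis .
qed

lemma U0_const: "U0 t x = U0 0 0"
proof -
  have U0_x: "px U0 t x = 0" for t x
    using U1_t_eq[of t x] U1_t_zero[of t x] C_nonzero[of t x] by simp
  then have "pt U0 t x = 0" for t x
    using U0_t_eq[of t x] by (simp add: px_def[of "px U0"])
  have "U0 t x = U0 t 0" by (rule smooth2_const_in_x[OF smooth_U0]) (rule U0_x)
  also have "\<dots> = U0 0 0" by (rule smooth2_const_in_t[OF smooth_U0]) fact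
  finally show ?thesis .
qed

lemma normal_form:
  "\<exists>T X U0 U1. smooth1 T \<and> smooth2 X \<and>
     (\<forall>t x u. tau t x u = T t \<and> xi t x u = X t x \<and> ups t x u = U1 * u + U0) \<and>
     (\<forall>t x. deriv T t * px X t x * U1 \<noteq> 0) \<and>
     (\<forall>t x. pt X t x = A2 t x * px (px X) t x + U0 * C t x / U1 * px X t x) \<and>
     (\<forall>t x. C' (T t) (X t x) = px X t x / (deriv T t * U1) * C t x) \<and>
     (\<forall>t x. A2' (T t) (X t x) = (px X t x)\<^sup>2 / deriv T t * A2 t x)"
proof (rule exI[of _ T], rule exI[of _ X], rule exI[of _ "U0 0 0"], rule exI[of _ "U1 0 0"], intro conjI allI)
  show "smooth1 T" using smooth3_slice1[OF smooth_tau] by (simp add: T_def[abs_def])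
  show "smooth2 X" using smooth3_slice2[OF smooth_xi] by (simp add: X_def[abs_def])
  fix t x
  have U1: "U1 0 0 \<noteq> 0" using U1_nonzero .
  show "deriv T t * px X t x * U1 0 0 \<noteq> 0" using T'_nonzero X_x_nonzero U1 by simp
  show "pt X t x = A2 t x * px (px X) t x + U0 0 0 * C t x / U1 0 0 * px X t x"
    using kolmogorov[of t x] by (simp add: U0_const[of t x] U1_const[of t x])
  show "C' (T t) (X t x) = px X t x / (deriv T t * U1 0 0) * C t x"
    using C'_transform[of t x] T'_nonzero[of t] U1 by (simp add: U1_const[of t x] field_simps)
  show "A2' (T t) (X t x) = (px X t x)\<^sup>2 / deriv T t * A2 t x" by (rule A2'_eq)
  fix u
  show "tau t x u = T t" by (rule tau_eq)
  show "xi t x u = X t x" by (rule xi_eq)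
  show "ups t x u = U1 0 0 * u + U0 0 0" by (simp add: ups_eq U0_const[of t x] U1_const[of t x])
qed

end

lemma maps_eqI:
  fixes T :: "real \<Rightarrow> real" and X :: "real \<Rightarrow> real \<Rightarrow> real"
  assumes tau: "\<And>t x u. tau t x u = T t" and xi: "\<And>t x u. xi t x u = X t x"
    and ups: "\<And>t x u. ups t x u = U1 * u + U0"
    and nonzero: "\<And>t x. deriv T t * px X t x * U1 \<noteq> 0"
    and kolmogorov: "\<And>t x. pt X t x = A2 t x * px (px X) t x + U0 * C t x / U1 * px X t x"
    and C'_eq: "\<And>t x. C' (T t) (X t x) = px X t x / (deriv T t * U1) * C t x"
    and A2'_eq: "\<And>t x. A2' (T t) (X t x) = (px X t x)\<^sup>2 / deriv T t * A2 t x"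
  shows "maps_eq tau xi ups A2 C A2' C'"
  unfolding maps_eq_def
proof (intro allI impI)
  fix t x u p q r s w t' x' u' p' q' r' s' w'
  assume rel: "prolong_rel tau xi ups t x u p q r s w t' x' u' p' q' r' s' w'"
  have tau_fun: "tau = (\<lambda>t x u. T t)" and xi_fun: "xi = (\<lambda>t x u. X t x)"
    and ups_fun: "ups = (\<lambda>t x u. U1 * u + U0)"
    using tau xi ups by (simp_all add: fun_eq_iff)
  have "d3 ups t x u = U1" for t x u
    unfolding ups_fun d3_def by (rule DERIV_imp_deriv) (auto intro!: derivative_eq_intros)
  then have derivs: "Dt tau t x u p = deriv T t" "Dx tau t x u q = 0" "Dxx tau t x u q w = 0"
    "Dt xi t x u p = pt X t x" "Dx xi t x u q = px X t x" "Dxx xi t x u q w = px (px X) t x"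
    "Dt ups t x u p = U1 * p" "Dx ups t x u q = U1 * q" "Dxx ups t x u q w = U1 * w"
    by (simp_all add: Dt_def Dx_def Dxx_def d1_def d2_def d3_def pt_def px_def tau_fun xi_fun ups_fun)
  define a where "a = deriv T t"
  define d where "d = px X t x"
  have a: "a \<noteq> 0" and U1: "U1 \<noteq> 0" using nonzero[of t x] unfolding a_def by auto
  have image: "t' = T t" "x' = X t x" "u' = U1 * u + U0"
    using rel unfolding prolong_rel_def by (simp_all add: tau xi ups)
  have "U1 * p = p' * a + q' * pt X t x" "U1 * q = q' * d" "U1 * w = w' * d\<^sup>2 + q' * px (px X) t x"
    using rel unfolding prolong_rel_def derivs a_def d_def by auto
  moreover have "C' t' x' = d * inverse a * inverse U1 * C t x" "A2' t' x' = d\<^sup>2 * inverse a * A2 t x"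
    using C'_eq[of t x] A2'_eq[of t x] unfolding image a_def d_def by (simp_all add: divide_inverse)
  moreover have "pt X t x = A2 t x * px (px X) t x + U0 * C t x * inverse U1 * d"
    using kolmogorov[of t x] unfolding d_def by (simp add: divide_inverse)
  moreover have "inverse a * a = 1" "inverse U1 * U1 = 1" using a U1 by simp_all
  ultimately have "a * (p' + C' t' x' * u' * q' - A2' t' x' * w') = U1 * (p + C t x * u * q - A2 t x * w)"
    unfolding image(3) by algebra
  then show "on_eq A2 C t x u p q w \<longleftrightarrow> on_eq A2' C' t' x' u' p' q' w'"
    using a U1 unfolding on_eq_def by (metis eq_iff_diff_eq_0 mult_eq_0_iff)
qed

theorem proposition9:
  fixes A2 C A2' C' :: "real \<Rightarrow> real \<Rightarrow> real"
    and tau xi ups :: "real \<Rightarrow> real \<Rightarrow> real \<Rightarrow> real"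
  assumes "in_class_L1 A2 C" and "in_class_L1 A2' C'"
    and "point_transformation tau xi ups"
  shows "maps_eq tau xi ups A2 C A2' C' \<longleftrightarrow>
    (\<exists>T X U0 U1. smooth1 T \<and> smooth2 X \<and>
       (\<forall>t x u. tau t x u = T t \<and> xi t x u = X t x \<and> ups t x u = U1 * u + U0) \<and>
       (\<forall>t x. deriv T t * px X t x * U1 \<noteq> 0) \<and>
       (\<forall>t x. pt X t x = A2 t x * px (px X) t x + U0 * C t x / U1 * px X t x) \<and>
       (\<forall>t x. C' (T t) (X t x) = px X t x / (deriv T t * U1) * C t x) \<and>
       (\<forall>t x. A2' (T t) (X t x) = (px X t x)\<^sup>2 / deriv T t * A2 t x))"
proof -
  have L1: "L1_equivalence A2 C A2' C' tau xi ups" if "maps_eq tau xi ups A2 C A2' C'"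
    using assms that
    by (auto simp: L1_equivalence_def L1_equivalence_axioms_def L_equivalence_def in_class_L1_def)
  show ?thesis
    by (rule iffI, erule L1_equivalence.normal_form[OF L1]) (auto intro: maps_eqI)
qed

end
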